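(* Let $X$ be a finite two-wide poset and $f\colon X\to\mathbb R$ a Morse function on $X$. Then $f$ satisfies the Exclusion condition: for every regular (i.e. non-critical) point $x\in X$, exactly one of the following holds: (1) there exists exactly one $y\in X$ with $x\prec y$ and $f(x)\ge f(y)$; (2) there exists exactly one $w\in X$ with $w\prec x$ and $f(w)\ge f(x)$.
   Context: In a poset, write $a\prec b$ if $a<b$ and there is no $c$ with $a<c<b$. A poset $X$ is two-wide if for any $x,z,y$ with $x\prec z\prec y$ there is $z'\neq z$ with $x\prec z'\prec y$. A Morse function on a finite poset $X$ is a map $f\colon X\to\mathbb R$ such that for every $x\in X$, $\#\{y: x\prec y,\ f(x)\ge f(y)\}\le1$ and $\#\{w: w\prec x,\ f(w)\ge f(x)\}\le 1$. A point $x$ is critical if both these sets are empty; otherwise it is regular. *)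

theory Defs
  imports Main "HOL.Real"
begin

text \<open>Posets are modelled as a carrier set X inside a type with a partial order,
  carrying the induced order.\<close>

definition covers :: "'a::order set \<Rightarrow> 'a \<Rightarrow> 'a \<Rightarrow> bool" where
  "covers X a b \<longleftrightarrow> a \<in> X \<and> b \<in> X \<and> a < b \<and> \<not> (\<exists>c\<in>X. a < c \<and> c < b)"

definition two_wide :: "'a::order set \<Rightarrow> bool" where
  "two_wide X \<longleftrightarrow> (\<forall>x z y. covers X x z \<and> covers X z y \<longrightarrow>
      (\<exists>z'. z' \<noteq> z \<and> covers X x z' \<and> covers X z' y))"

definition up_set :: "'a::order set \<Rightarrow> ('a \<Rightarrow> real) \<Rightarrow> 'a \<Rightarrow> 'a set" where
  "up_set X f x = {y. covers X x y \<and> f x \<ge> f y}"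

definition down_set :: "'a::order set \<Rightarrow> ('a \<Rightarrow> real) \<Rightarrow> 'a \<Rightarrow> 'a set" where
  "down_set X f x = {w. covers X w x \<and> f w \<ge> f x}"

definition morse :: "'a::order set \<Rightarrow> ('a \<Rightarrow> real) \<Rightarrow> bool" where
  "morse X f \<longleftrightarrow> (\<forall>x\<in>X. card (up_set X f x) \<le> 1 \<and> card (down_set X f x) \<le> 1)"

definition critical :: "'a::order set \<Rightarrow> ('a \<Rightarrow> real) \<Rightarrow> 'a \<Rightarrow> bool" where
  "critical X f x \<longleftrightarrow> up_set X f x = {} \<and> down_set X f x = {}"

end

theory Submission
  imports Defs
begin

text \<open>A regular point has a non-empty up-set or down-set, and by the Morse condition each of them
  has at most one element; so the content is that the two cannot both be non-empty. If
  \<open>w \<prec> x \<prec> y\<close> with \<open>f w \<ge> f x \<ge> f y\<close>, two-wideness gives a second point \<open>z \<noteq> x\<close> with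
  \<open>w \<prec> z \<prec> y\<close>. Either \<open>f w \<ge> f z\<close>, and then \<open>x\<close> and \<open>z\<close> both lie in the up-set of \<open>w\<close>,
  or \<open>f z > f w \<ge> f y\<close>, and then both lie in the down-set of \<open>y\<close>; either way the Morse
  condition fails.\<close>

lemma finite_up_set: "finite X \<Longrightarrow> finite (up_set X f x)"
  by (rule finite_subset[of _ X]) (auto simp: up_set_def covers_def)

lemma finite_down_set: "finite X \<Longrightarrow> finite (down_set X f x)"
  by (rule finite_subset[of _ X]) (auto simp: down_set_def covers_def)

lemma card_le_1_doubleton_False:
  assumes "finite A" "card A \<le> 1" "a \<in> A" "b \<in> A" "a \<noteq> b"
  shows False
  using assms by (metis card_le_Suc0_iff_eq One_nat_def)

lemma ex1_mem_iff_nonempty: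
  assumes "finite A" "card A \<le> 1"
  shows "(\<exists>!a. a \<in> A) \<longleftrightarrow> A \<noteq> {}"
proof
  assume "A \<noteq> {}"
  then obtain a where "a \<in> A" by blast
  then show "\<exists>!a. a \<in> A"
    using card_le_1_doubleton_False[OF assms] by blast
qed blast

lemma morse_ex1_up_iff:
  assumes "finite X" "morse X f" "x \<in> X"
  shows "(\<exists>!y. covers X x y \<and> f x \<ge> f y) \<longleftrightarrow> up_set X f x \<noteq> {}"
proof -
  have "card (up_set X f x) \<le> 1"
    using assms(2,3) by (simp add: morse_def)
  from ex1_mem_iff_nonempty[OF finite_up_set[OF assms(1)] this] show ?thesis
    by (simp add: up_set_def)
qed

lemma morse_ex1_down_iff:
  assumes "finite X" "morse X f" "x \<in> X"
  shows "(\<exists>!w. covers X w x \<and> f w \<ge> f x) \<longleftrightarrow> down_set X f x \<noteq> {}"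
proof -
  have "card (down_set X f x) \<le> 1"
    using assms(2,3) by (simp add: morse_def)
  from ex1_mem_iff_nonempty[OF finite_down_set[OF assms(1)] this] show ?thesis
    by (simp add: down_set_def)
qed

lemma morse_up_set_or_down_set_empty:
  assumes "finite X" "two_wide X" "morse X f"
  shows "up_set X f x = {} \<or> down_set X f x = {}"
proof (rule ccontr)
  assume "\<not> ?thesis"
  then obtain y w where y: "y \<in> up_set X f x" and w: "w \<in> down_set X f x"
    by blast
  have wx: "covers X w x" "f w \<ge> f x" and xy: "covers X x y" "f x \<ge> f y"
    using w y by (auto simp: down_set_def up_set_def)
  obtain z where z: "z \<noteq> x" "covers X w z" "covers X z y"
    using assms(2) wx(1) xy(1) unfolding two_wide_def by blast
  have "w \<in> X" "y \<in> X"
    using wx(1) xy(1) by (auto simp: covers_def)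
  show False
  proof (cases "f w \<ge> f z")
    case True
    have "card (up_set X f w) \<le> 1"
      using assms(3) \<open>w \<in> X\<close> by (simp add: morse_def)
    moreover have "z \<in> up_set X f w" "x \<in> up_set X f w"
      using True z wx by (auto simp: up_set_def)
    ultimately show False
      by (rule card_le_1_doubleton_False[OF finite_up_set[OF assms(1)] _ _ _ z(1)])
  next
    case False
    have "card (down_set X f y) \<le> 1"
      using assms(3) \<open>y \<in> X\<close> by (simp add: morse_def)
    moreover have "z \<in> down_set X f y" "x \<in> down_set X f y"
      using False z wx xy by (auto simp: down_set_def)
    ultimately show False
      by (rule card_le_1_doubleton_False[OF finite_down_set[OF assms(1)] _ _ _ z(1)])
  qed
qed

theorem mainTheorem5:
  fixes X :: "'a::order set" and f :: "'a \<Rightarrow> real"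
  assumes "finite X" and "two_wide X" and "morse X f"
    and "x \<in> X" and "\<not> critical X f x"
  shows "(\<exists>!y. covers X x y \<and> f x \<ge> f y) \<noteq> (\<exists>!w. covers X w x \<and> f w \<ge> f x)"
proof -
  have "up_set X f x = {} \<longleftrightarrow> down_set X f x \<noteq> {}"
    using morse_up_set_or_down_set_empty[OF assms(1-3), of x] assms(5)
    unfolding critical_def by argo
  then show ?thesis
    unfolding morse_ex1_up_iff[OF assms(1,3,4)] morse_ex1_down_iff[OF assms(1,3,4)] by argo
qed

end
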